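(* Let $\varphi:[0,1]\to[0,1]$ be non-decreasing and continuously differentiable with $\varphi(0)=0$, $\varphi(1)=1$, and suppose $z\mapsto z\varphi(z)$ is convex. Consider the problem of finding a piecewise constant function $\psi$ on $[0,1]$ with $2$ pieces (i.e. constant on $[0,z)$ and on $[z,1]$ for some $z\in[0,1]$) such that $\psi\leq\varphi$ on $[0,1]$ and $\int_0^1(\varphi(t)-\psi(t))\,dt$ is minimal. Then the minimum is reached with a step $z$ satisfying $(1-z)\varphi'(z)=\varphi(z)$. *)

theory Defs
  imports "HOL-Analysis.Analysis"
begin

definition step2 :: "real \<Rightarrow> real \<Rightarrow> real \<Rightarrow> real \<Rightarrow> real" where
  "step2 z a b t = (if t < z then a else b)"

definition admissible2 :: "(real \<Rightarrow> real) \<Rightarrow> real \<Rightarrow> real \<Rightarrow> real \<Rightarrow> bool" where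
  "admissible2 \<phi> z a b \<longleftrightarrow> z \<in> {0..1} \<and> (\<forall>t\<in>{0..1}. step2 z a b t \<le> \<phi> t)"

definition err2 :: "(real \<Rightarrow> real) \<Rightarrow> real \<Rightarrow> real \<Rightarrow> real \<Rightarrow> real" where
  "err2 \<phi> z a b = integral {0..1} (\<lambda>t. \<phi> t - step2 z a b t)"

end

theory Submission
  imports Defs
begin

text \<open>The error is \<open>\<integral>\<phi>\<close> minus the area under the step, so one maximises that area.
  Admissibility forces \<open>a \<le> \<phi> 0\<close> and \<open>b \<le> \<phi> z\<close>, and for monotone \<open>\<phi>\<close> these bounds are
  attained; with \<open>\<phi> 0 = 0\<close> the problem becomes maximising \<open>(1 - z) \<phi> z\<close> over \<open>[0,1]\<close>.
  This is positive near \<open>1\<close> and vanishes at both endpoints, so it is maximised in the interior,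
  where Fermat's rule gives \<open>(1 - z) \<phi>' z = \<phi> z\<close>.\<close>

lemma has_integral_step2:
  assumes "z \<in> {0..1}"
  shows "(step2 z a b has_integral (z * a + (1 - z) * b)) {0..1}"
proof -
  have left: "(step2 z a b has_integral (z * a)) {0..z}"
  proof (rule has_integral_spike_finite[of "{z}" _ _ "\<lambda>_. a"])
    show "((\<lambda>_. a) has_integral (z * a)) {0..z}"
      using has_integral_const_real[of a 0 z] assms by simp
  qed (auto simp: step2_def)
  have right: "(step2 z a b has_integral ((1 - z) * b)) {z..1}"
  proof (rule has_integral_spike_finite[of "{}" _ _ "\<lambda>_. b"])
    show "((\<lambda>_. b) has_integral ((1 - z) * b)) {z..1}"
      using has_integral_const_real[of b z 1] assms by simp
  qed (auto simp: step2_def)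
  show ?thesis
    using has_integral_combine[OF _ _ left right] assms by auto
qed

lemma err2_eq:
  assumes "\<phi> integrable_on {0..1}" and "z \<in> {0..1}"
  shows "err2 \<phi> z a b = integral {0..1} \<phi> - (z * a + (1 - z) * b)"
  using integral_diff[OF assms(1) has_integral_integrable[OF has_integral_step2]]
    integral_unique[OF has_integral_step2] assms(2)
  unfolding err2_def by simp

lemma admissible2_area_le:
  assumes "admissible2 \<phi> z a b"
  shows "z * a + (1 - z) * b \<le> z * \<phi> 0 + (1 - z) * \<phi> z"
proof -
  have z: "z \<in> {0..1}" and below: "\<And>t. t \<in> {0..1} \<Longrightarrow> step2 z a b t \<le> \<phi> t"
    using assms unfolding admissible2_def by auto
  have "z * a \<le> z * \<phi> 0"
  proof (cases "z = 0")
    case False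
    then show ?thesis
      using below[of 0] z by (auto simp: step2_def intro: mult_left_mono)
  qed simp
  moreover have "(1 - z) * b \<le> (1 - z) * \<phi> z"
  proof (cases "z = 1")
    case False
    then show ?thesis
      using below[of z] z by (auto simp: step2_def intro: mult_left_mono)
  qed simp
  ultimately show ?thesis by simp
qed

lemma admissible2_mono_step:
  assumes "mono_on {0..1} \<phi>" and "z \<in> {0..1}"
  shows "admissible2 \<phi> z (\<phi> 0) (\<phi> z)"
  unfolding admissible2_def step2_def
  using assms by (auto intro: mono_onD)

lemma err2_mono_step_minimal:
  assumes "mono_on {0..1} \<phi>" and "\<phi> integrable_on {0..1}" and "z \<in> {0..1}"
    and "\<And>y. y \<in> {0..1} \<Longrightarrow> y * \<phi> 0 + (1 - y) * \<phi> y \<le> z * \<phi> 0 + (1 - z) * \<phi> z"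
    and "admissible2 \<phi> z' a' b'"
  shows "err2 \<phi> z (\<phi> 0) (\<phi> z) \<le> err2 \<phi> z' a' b'"
proof -
  have "z' \<in> {0..1}"
    using assms(5) unfolding admissible2_def by simp
  then show ?thesis
    using err2_eq[OF assms(2) assms(3)] err2_eq[OF assms(2) \<open>z' \<in> {0..1}\<close>]
      admissible2_area_le[OF assms(5)] assms(4)[of z'] by simp
qed

lemma interior_max_deriv_zero:
  fixes g :: "real \<Rightarrow> real"
  assumes "z \<in> {0<..<1}" and "(g has_real_derivative D) (at z within {0..1})"
    and "\<And>y. y \<in> {0..1} \<Longrightarrow> g y \<le> g z"
  shows "D = 0"
proof (rule DERIV_local_max)
  have "at z within {0..1} = at z"
    using assms(1) by (intro at_within_interior) auto
  then show "(g has_real_derivative D) (at z)"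
    using assms(2) by simp
  show "0 < min z (1 - z)"
    using assms(1) by simp
  show "\<forall>y. \<bar>z - y\<bar> < min z (1 - z) \<longrightarrow> g y \<le> g z"
    using assms(3) by (auto simp: abs_less_iff)
qed

lemma exists_pos_weighted_near_one:
  fixes \<phi> :: "real \<Rightarrow> real"
  assumes "continuous_on {0..1} \<phi>" and "\<phi> 1 > 0"
  shows "\<exists>t\<in>{0..1}. (1 - t) * \<phi> t > 0"
proof -
  have "(\<phi> \<longlongrightarrow> \<phi> 1) (at 1 within {0..<1})"
  proof (rule tendsto_within_subset)
    show "(\<phi> \<longlongrightarrow> \<phi> 1) (at 1 within {0..1})"
      using assms(1) by (simp add: continuous_on_def)
  qed auto
  then have "\<forall>\<^sub>F t in at 1 within {0..<1}. \<phi> t > 0"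
    using assms(2) by (rule order_tendstoD)
  moreover have "\<forall>\<^sub>F t in at 1 within {0..<1}. t \<in> {0..<1}"
    by (simp add: eventually_at_filter)
  moreover have "at (1::real) within {0..<1} \<noteq> bot"
    by (simp add: at_within_eq_bot_iff closure_atLeastLessThan)
  ultimately obtain t where "t \<in> {0..<1}" "\<phi> t > 0"
    using eventually_happens'[OF _ eventually_conj] by blast
  then show ?thesis by (intro bexI[of _ t]) auto
qed

theorem proposition3:
  fixes \<phi> \<phi>' :: "real \<Rightarrow> real"
  assumes "mono_on {0..1} \<phi>"
    and "\<phi> ` {0..1} \<subseteq> {0..1}"
    and "\<phi> 0 = 0" and "\<phi> 1 = 1"
    and "\<And>t. t \<in> {0..1} \<Longrightarrow> (\<phi> has_real_derivative \<phi>' t) (at t within {0..1})"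
    and "continuous_on {0..1} \<phi>'"
    and "convex_on {0..1} (\<lambda>z. z * \<phi> z)"
  shows "\<exists>z a b. admissible2 \<phi> z a b
           \<and> (\<forall>z' a' b'. admissible2 \<phi> z' a' b' \<longrightarrow> err2 \<phi> z a b \<le> err2 \<phi> z' a' b')
           \<and> (1 - z) * \<phi>' z = \<phi> z"
proof -
  have cont: "continuous_on {0..1} \<phi>"
    using assms(5) DERIV_continuous continuous_on_eq_continuous_within by blast
  define g where "g z = (1 - z) * \<phi> z" for z
  have g_cont: "continuous_on {0..1} g"
    unfolding g_def by (intro continuous_intros cont)
  obtain z where z: "z \<in> {0..1}" and max: "\<And>y. y \<in> {0..1} \<Longrightarrow> g y \<le> g z"
    using continuous_attains_sup[OF compact_Icc _ g_cont] by auto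
  obtain t where "t \<in> {0..1}" "g t > 0"
    using exists_pos_weighted_near_one[OF cont] assms(4) unfolding g_def by auto
  then have "g z > 0"
    using max[of t] by simp
  then have z_interior: "z \<in> {0<..<1}"
    using z assms(3) unfolding g_def by (auto simp: order_le_less)
  have g_deriv: "(g has_real_derivative ((1 - z) * \<phi>' z - \<phi> z)) (at z within {0..1})"
    unfolding g_def using z by (auto intro!: derivative_eq_intros assms(5))
  have stationary: "(1 - z) * \<phi>' z - \<phi> z = 0"
    by (rule interior_max_deriv_zero[OF z_interior g_deriv max])
  have integrable: "\<phi> integrable_on {0..1}"
    using cont integrable_continuous_real by blast
  have optimal: "err2 \<phi> z (\<phi> 0) (\<phi> z) \<le> err2 \<phi> z' a' b'"
    if "admissible2 \<phi> z' a' b'" for z' a' b'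
    using err2_mono_step_minimal[OF assms(1) integrable z _ that] max assms(3)
    unfolding g_def by simp
  show ?thesis
    using admissible2_mono_step[OF assms(1) z] optimal stationary by auto
qed

end
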